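(* Let $B$ be a Boolean algebra, let $U,V,W\subset B^n$ be Boolean domains over $B$ with $U\cup V\subset W$, and let $F:U\to V$ be a Boolean isomorphism. Then there is a Boolean isomorphism $F':W\to W$ whose restriction to $U$ is $F$.
   Context: $B$ is a fixed Boolean algebra, with operations $\vee,\wedge$, complement, and symmetric difference $a\triangle b=(a\setminus b)\vee(b\setminus a)$. A Boolean function $f:B^n\to B$ is a function given by a polynomial expression built from the variables, elements of $B$, and the Boolean operations $\vee,\wedge$ and complement (e.g. $f(x_1,x_2)=(x_1\vee x_2)\triangle a$ with $a\in B$ fixed). A Boolean domain is a set $V=\{x\in B^n: f(x)=0\}$ for some Boolean function $f:B^n\to B$. If $U\subset B^n$ and $V\subset B^m$ are Boolean domains, a map $F:U\to V$ is a Boolean transformation if there are Boolean functions $F_1,\dots,F_m:B^n\to B$ with $F(x)=(F_1(x),\dots,F_m(x))$ for all $x\in U$. A Boolean isomorphism is a bijective Boolean transformation. *)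

theory Defs
  imports Main
begin

text \<open>Points of B^n are lists of length n over a Boolean algebra 'a.
  Boolean functions B^n -> B: functions given by polynomial expressions built
  from the variables x_1..x_n, constants of B, join, meet and complement.\<close>

datatype 'a bexp = Var nat | Const 'a | Join "'a bexp" "'a bexp"
  | Meet "'a bexp" "'a bexp" | Compl "'a bexp"

fun beval :: "'a::boolean_algebra bexp \<Rightarrow> 'a list \<Rightarrow> 'a" where
  "beval (Var i) x = x ! i"
| "beval (Const c) x = c"
| "beval (Join e1 e2) x = sup (beval e1 x) (beval e2 x)"
| "beval (Meet e1 e2) x = inf (beval e1 x) (beval e2 x)"
| "beval (Compl e) x = - beval e x"

fun bvars_below :: "nat \<Rightarrow> 'a bexp \<Rightarrow> bool" where
  "bvars_below n (Var i) = (i < n)"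
| "bvars_below n (Const c) = True"
| "bvars_below n (Join e1 e2) = (bvars_below n e1 \<and> bvars_below n e2)"
| "bvars_below n (Meet e1 e2) = (bvars_below n e1 \<and> bvars_below n e2)"
| "bvars_below n (Compl e) = bvars_below n e"

definition bool_points :: "nat \<Rightarrow> 'a list set" where
  "bool_points n = {x. length x = n}"

definition bool_fun :: "nat \<Rightarrow> ('a::boolean_algebra list \<Rightarrow> 'a) \<Rightarrow> bool" where
  "bool_fun n f \<longleftrightarrow> (\<exists>e. bvars_below n e \<and> (\<forall>x\<in>bool_points n. f x = beval e x))"

definition bool_domain :: "nat \<Rightarrow> 'a::boolean_algebra list set \<Rightarrow> bool" where
  "bool_domain n V \<longleftrightarrow> (\<exists>f. bool_fun n f \<and> V = {x\<in>bool_points n. f x = bot})"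

definition bool_trans ::
  "nat \<Rightarrow> nat \<Rightarrow> ('a::boolean_algebra list \<Rightarrow> 'a list) \<Rightarrow> 'a list set \<Rightarrow> 'a list set \<Rightarrow> bool" where
  "bool_trans n m F U V \<longleftrightarrow>
     F ` U \<subseteq> V \<and>
     (\<exists>Fs. length Fs = m \<and> (\<forall>g\<in>set Fs. bool_fun n g) \<and> (\<forall>x\<in>U. F x = map (\<lambda>g. g x) Fs))"

definition bool_iso ::
  "nat \<Rightarrow> nat \<Rightarrow> ('a::boolean_algebra list \<Rightarrow> 'a list) \<Rightarrow> 'a list set \<Rightarrow> 'a list set \<Rightarrow> bool" where
  "bool_iso n m F U V \<longleftrightarrow> bool_trans n m F U V \<and> bij_betw F U V"

end

theory Submission
  imports Defs
begin

(* Only finitely many constants ks of B occur in the expressions defining U, V, W and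
   F.  The minterms minterm \<tau> ks are the atoms of the finite subalgebra they generate;
   for a point x, an element below such an atom and below the minterm of the
   coordinates of x with signs \<alpha> is called a piece.  On a piece, every expression
   behaves like its evaluation in the two-element algebra at (\<tau>, \<alpha>), and two elements
   of B are equal iff they agree on all pieces.  So over a nonzero atom the domains
   become sets of bit vectors U_at \<subseteq> W_at and V_at \<subseteq> W_at, and F becomes a bijection
   F_at : U_at -> V_at; both facts are shown by patching points of U and V so that they
   carry a prescribed bit pattern below the atom.  Extending each F_at to a permutation
   of the finite set W_at and gluing these permutations, resp. their inverses, by a
   disjunctive normal form gives the required isomorphism of W and its inverse. *)

section \<open>Finite joins and minterms\<close>

definition lit :: "bool \<Rightarrow> 'a::boolean_algebra \<Rightarrow> 'a" where
  "lit b a = (if b then a else - a)"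

fun minterm :: "bool list \<Rightarrow> 'a::boolean_algebra list \<Rightarrow> 'a" where
  "minterm (b # bs) (a # as) = inf (lit b a) (minterm bs as)"
| "minterm _ _ = top"

(* Finite joins; the lattice of a Boolean algebra need not be complete. *)
definition join_list :: "'a::boolean_algebra list \<Rightarrow> 'a" where
  "join_list xs = foldr sup xs bot"

lemma join_list_simps [simp]:
  "join_list [] = bot"
  "join_list (x # xs) = sup x (join_list xs)"
  "join_list (xs @ ys) = sup (join_list xs) (join_list ys)"
  by (induction xs) (auto simp: join_list_def sup_assoc)

lemma join_list_concat: "join_list (concat xss) = join_list (map join_list xss)"
  by (induction xss) auto

lemma join_list_inf: "inf (join_list xs) a = join_list (map (\<lambda>x. inf x a) xs)"
  by (induction xs) (auto simp: inf_sup_distrib2)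

lemma join_list_two_valued:
  "\<forall>x\<in>set xs. x = d \<or> x = bot \<Longrightarrow> join_list xs = (if d \<in> set xs then d else bot)"
  by (induction xs) auto

lemma in_n_lists_iff: "\<beta> \<in> set (List.n_lists m [True, False]) \<longleftrightarrow> length \<beta> = m"
  by (auto simp: set_n_lists)

lemma minterm_append:
  "length bs = length as \<Longrightarrow> minterm (bs @ cs) (as @ ds) = inf (minterm bs as) (minterm cs ds)"
  by (induction bs as rule: list_induct2) (auto simp: inf_assoc)

lemma minterms_cover:
  "join_list (map (\<lambda>\<beta>. minterm \<beta> L) (List.n_lists (length L) [True, False])) = top"
proof (induction L)
  case Nil
  then show ?case by simp
next
  case (Cons a L)
  have split: "sup (inf (lit True a) c) (inf (lit False a) c) = c" for c
    by (simp add: lit_def inf_sup_distrib2[symmetric] del: inf_sup_distrib2)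
  have "join_list (map (\<lambda>\<beta>. minterm \<beta> (a # L)) (List.n_lists (length (a # L)) [True, False]))
     = join_list (map (\<lambda>\<beta>. sup (inf (lit True a) (minterm \<beta> L)) (inf (lit False a) (minterm \<beta> L)))
                    (List.n_lists (length L) [True, False]))"
    by (simp add: join_list_concat map_concat comp_def)
  also have "\<dots> = join_list (map (\<lambda>\<beta>. minterm \<beta> L) (List.n_lists (length L) [True, False]))"
    by (simp only: split)
  finally show ?case using Cons by simp
qed

lemma minterms_disjoint:
  "length \<beta> = length L \<Longrightarrow> length \<gamma> = length L \<Longrightarrow> \<beta> \<noteq> \<gamma> \<Longrightarrow>
   inf (minterm \<beta> L) (minterm \<gamma> L) = bot"
proof (induction \<beta> L arbitrary: \<gamma> rule: list_induct2)
  case Nil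
  then show ?case by simp
next
  case (Cons b bs a as)
  then obtain c cs where \<gamma>: "\<gamma> = c # cs" "length cs = length as" by (cases \<gamma>) auto
  have "inf (lit b a) (lit c a) = bot \<or> inf (minterm bs as) (minterm cs as) = bot"
    using Cons \<gamma> by (auto simp: lit_def)
  moreover have "inf (minterm (b # bs) (a # as)) (minterm \<gamma> (a # as))
      \<le> inf (lit b a) (lit c a)"
    "inf (minterm (b # bs) (a # as)) (minterm \<gamma> (a # as))
      \<le> inf (minterm bs as) (minterm cs as)"
    using \<gamma> by (auto intro: le_infI1 le_infI2)
  ultimately show ?case using bot_unique by metis
qed

lemma inf_minterm_below_minterm:
  fixes d :: "'a::boolean_algebra"
  assumes "d \<le> minterm \<gamma> L" "length \<gamma> = length L" "length \<beta> = length L"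
  shows "inf (minterm \<beta> L) d = (if \<beta> = \<gamma> then d else bot)"
proof (cases "\<beta> = \<gamma>")
  case False
  have "inf (minterm \<beta> L) d \<le> inf (minterm \<beta> L) (minterm \<gamma> L)"
    using assms(1) by (intro inf_mono) auto
  then show ?thesis using minterms_disjoint[OF assms(3,2) False] False bot_unique by metis
qed (use assms(1) in \<open>simp add: inf.absorb2\<close>)

lemma inf_nth_minterm:
  "length \<beta> = length L \<Longrightarrow> j < length L \<Longrightarrow>
   inf (L ! j) (minterm \<beta> L) = (if \<beta> ! j then minterm \<beta> L else bot)"
proof (induction \<beta> L arbitrary: j rule: list_induct2)
  case Nil
  then show ?case by simp
next
  case (Cons b bs a as)
  show ?case
  proof (cases j)
    case 0
    then show ?thesis by (cases b) (simp_all add: lit_def inf_assoc[symmetric])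
  next
    case (Suc j')
    then show ?thesis using Cons by (simp add: inf_left_commute[of "as ! j'"])
  qed
qed

lemma below_minterm_nth:
  "d \<le> minterm \<beta> L \<Longrightarrow> length \<beta> = length L \<Longrightarrow> j < length L \<Longrightarrow>
   inf (L ! j) d = (if \<beta> ! j then d else bot)"
proof -
  assume d: "d \<le> minterm \<beta> L" and len: "length \<beta> = length L" "j < length L"
  have "inf (L ! j) d = inf (inf (L ! j) (minterm \<beta> L)) d"
    using d by (simp add: inf_assoc inf.absorb2)
  then show ?thesis using inf_nth_minterm[OF len] d by (simp add: inf.absorb2)
qed

lemma below_minterm_intro:
  "length \<beta> = length L \<Longrightarrow>
   (\<And>j. j < length L \<Longrightarrow> inf (L ! j) d = (if \<beta> ! j then d else bot)) \<Longrightarrow> d \<le> minterm \<beta> L"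
proof (induction \<beta> L rule: list_induct2)
  case Nil
  then show ?case by simp
next
  case (Cons b bs a as)
  have "d \<le> minterm bs as"
    using Cons(2)[OF Cons(3)[of "Suc j" for j, simplified]] by simp
  moreover have "d \<le> lit b a"
  proof (cases b)
    case False
    then have "inf d a = bot" using Cons(3)[of 0] by (simp add: inf_commute)
    then show ?thesis using False by (simp add: lit_def inf_shunt[symmetric])
  qed (use Cons(3)[of 0] in \<open>simp add: lit_def inf.absorb_iff2 inf_commute\<close>)
  ultimately show ?case by simp
qed

lemma eq_by_minterms:
  fixes a b :: "'a::boolean_algebra"
  assumes "\<And>\<beta>. length \<beta> = length L \<Longrightarrow> minterm \<beta> L \<noteq> bot \<Longrightarrow>
             inf a (minterm \<beta> L) = inf b (minterm \<beta> L)"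
  shows "a = b"
proof -
  define NL where "NL = List.n_lists (length L) [True, False]"
  have eq: "inf (minterm \<beta> L) a = inf (minterm \<beta> L) b" if "\<beta> \<in> set NL" for \<beta>
    using assms[of \<beta>] that by (cases "minterm \<beta> L = bot") (auto simp: NL_def in_n_lists_iff inf_commute)
  have "a = inf (join_list (map (\<lambda>\<beta>. minterm \<beta> L) NL)) a"
    by (simp add: minterms_cover NL_def)
  also have "\<dots> = join_list (map (\<lambda>\<beta>. inf (minterm \<beta> L) a) NL)"
    by (simp add: join_list_inf comp_def)
  also have "\<dots> = join_list (map (\<lambda>\<beta>. inf (minterm \<beta> L) b) NL)"
    using eq by (intro arg_cong[where f = join_list] map_cong) auto
  also have "\<dots> = inf (join_list (map (\<lambda>\<beta>. minterm \<beta> L) NL)) b"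
    by (simp add: join_list_inf comp_def)
  also have "\<dots> = b"
    by (simp add: minterms_cover NL_def)
  finally show ?thesis .
qed

lemma nonzero_meets_minterm:
  fixes c :: "'a::boolean_algebra"
  assumes "c \<noteq> bot"
  shows "\<exists>\<alpha>. length \<alpha> = length L \<and> inf c (minterm \<alpha> L) \<noteq> bot"
proof (rule ccontr)
  assume "\<not> ?thesis"
  then have "inf c (minterm \<beta> L) = inf bot (minterm \<beta> L)" if "length \<beta> = length L" for \<beta>
    using that by auto
  then show False using eq_by_minterms[of L c bot] assms by blast
qed

section \<open>Two-valued evaluation on pieces\<close>

fun consts_of :: "'a bexp \<Rightarrow> 'a list" where
  "consts_of (Var i) = []"
| "consts_of (Const c) = [c]"
| "consts_of (Join e1 e2) = consts_of e1 @ consts_of e2"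
| "consts_of (Meet e1 e2) = consts_of e1 @ consts_of e2"
| "consts_of (Compl e) = consts_of e"

fun beval2 :: "('a \<Rightarrow> bool) \<Rightarrow> (nat \<Rightarrow> bool) \<Rightarrow> 'a bexp \<Rightarrow> bool" where
  "beval2 c v (Var i) = v i"
| "beval2 c v (Const k) = c k"
| "beval2 c v (Join e1 e2) = (beval2 c v e1 \<or> beval2 c v e2)"
| "beval2 c v (Meet e1 e2) = (beval2 c v e1 \<and> beval2 c v e2)"
| "beval2 c v (Compl e) = (\<not> beval2 c v e)"

lemma inf_compl_relative: "inf (- a) d = inf (- (inf a d)) (d::'a::boolean_algebra)"
  by (simp add: inf_sup_distrib2)

lemma beval_relative:
  fixes d :: "'a::boolean_algebra"
  assumes "bvars_below n e" and "\<And>i. i < n \<Longrightarrow> inf (y ! i) d = inf (z ! i) d"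
  shows "inf (beval e y) d = inf (beval e z) d"
  using assms
proof (induction e)
  case (Join e1 e2)
  then show ?case by (simp add: inf_sup_distrib2)
next
  case (Meet e1 e2)
  have "inf (beval (Meet e1 e2) x) d = inf (inf (beval e1 x) d) (inf (beval e2 x) d)" for x
    by (simp add: inf_aci)
  then show ?case using Meet by simp
next
  case (Compl e)
  then show ?case by (simp add: inf_compl_relative[of "beval e y"] inf_compl_relative[of "beval e z"])
qed auto

lemma beval_two_valued:
  fixes d :: "'a::boolean_algebra"
  assumes "bvars_below n e"
    and "\<And>k. k \<in> set (consts_of e) \<Longrightarrow> inf k d = (if c k then d else bot)"
    and "\<And>i. i < n \<Longrightarrow> inf (x ! i) d = (if v i then d else bot)"
  shows "inf (beval e x) d = (if beval2 c v e then d else bot)"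
  using assms
proof (induction e)
  case (Join e1 e2)
  then show ?case by (simp add: inf_sup_distrib2)
next
  case (Meet e1 e2)
  have "inf (beval (Meet e1 e2) x) d = inf (inf (beval e1 x) d) (inf (beval e2 x) d)"
    by (simp add: inf_aci)
  then show ?case using Meet by simp
next
  case (Compl e)
  then show ?case by (simp add: inf_compl_relative[of "beval e x"])
qed auto

(* The bit of a constant below the atom minterm \<tau> ks of the algebra generated by ks,
   and the two-valued evaluation of an expression at such an atom and a bit vector \<alpha>. *)
definition const_bits :: "'a list \<Rightarrow> bool list \<Rightarrow> 'a \<Rightarrow> bool" where
  "const_bits ks \<tau> k \<longleftrightarrow> (\<exists>j<length ks. ks ! j = k \<and> \<tau> ! j)"

definition eval_bits :: "'a list \<Rightarrow> bool list \<Rightarrow> bool list \<Rightarrow> 'a bexp \<Rightarrow> bool" where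
  "eval_bits ks \<tau> \<alpha> e = beval2 (const_bits ks \<tau>) (\<lambda>i. \<alpha> ! i) e"

lemma const_below_minterm:
  fixes d :: "'a::boolean_algebra"
  assumes "length \<tau> = length ks" and "d \<le> minterm \<tau> ks" and "k \<in> set ks"
  shows "inf k d = (if const_bits ks \<tau> k then d else bot)"
proof -
  have bits: "inf (ks ! j) d = (if \<tau> ! j then d else bot)" if "j < length ks" for j
    using below_minterm_nth[OF assms(2,1) that] .
  show ?thesis
  proof (cases "const_bits ks \<tau> k")
    case True
    then obtain j where "j < length ks" "ks ! j = k" "\<tau> ! j" by (auto simp: const_bits_def)
    then show ?thesis using bits[of j] True by simp
  next
    case False
    obtain j where "j < length ks" "ks ! j = k" using assms(3) by (auto simp: in_set_conv_nth)
    then show ?thesis using bits[of j] False by (auto simp: const_bits_def)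
  qed
qed

lemma beval_on_piece:
  fixes d :: "'a::boolean_algebra"
  assumes "length \<tau> = length ks" "length \<alpha> = n" "length x = n"
    and "d \<le> minterm \<tau> ks" "d \<le> minterm \<alpha> x"
    and "bvars_below n e" "set (consts_of e) \<subseteq> set ks"
  shows "inf (beval e x) d = (if eval_bits ks \<tau> \<alpha> e then d else bot)"
  unfolding eval_bits_def
proof (rule beval_two_valued[OF assms(6)])
  show "inf k d = (if const_bits ks \<tau> k then d else bot)" if "k \<in> set (consts_of e)" for k
    using const_below_minterm[OF assms(1,4)] that assms(7) by blast
  show "inf (x ! i) d = (if \<alpha> ! i then d else bot)" if "i < n" for i
    using below_minterm_nth[OF assms(5)] that assms(2,3) by simp
qed

definition zeros :: "nat \<Rightarrow> 'a::boolean_algebra bexp \<Rightarrow> 'a list set" where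
  "zeros n e = {x. length x = n \<and> beval e x = bot}"

definition local_zeros :: "'a list \<Rightarrow> nat \<Rightarrow> bool list \<Rightarrow> 'a bexp \<Rightarrow> bool list set" where
  "local_zeros ks n \<tau> e = {\<alpha>. length \<alpha> = n \<and> \<not> eval_bits ks \<tau> \<alpha> e}"

lemma piece_of_zero_is_local_zero:
  fixes d :: "'a::boolean_algebra"
  assumes "length \<tau> = length ks" "length \<alpha> = n" "x \<in> zeros n e"
    and "d \<le> minterm \<tau> ks" "d \<le> minterm \<alpha> x" "d \<noteq> bot"
    and "bvars_below n e" "set (consts_of e) \<subseteq> set ks"
  shows "\<alpha> \<in> local_zeros ks n \<tau> e"
  using beval_on_piece[of \<tau> ks \<alpha> n x d e] assms by (auto simp: zeros_def local_zeros_def)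

lemma local_zero_vanishes_on_piece:
  fixes d :: "'a::boolean_algebra"
  assumes "length \<tau> = length ks" "\<alpha> \<in> local_zeros ks n \<tau> e" "length x = n"
    and "d \<le> minterm \<tau> ks" "d \<le> minterm \<alpha> x"
    and "bvars_below n e" "set (consts_of e) \<subseteq> set ks"
  shows "inf (beval e x) d = bot"
  using beval_on_piece[of \<tau> ks \<alpha> n x d e] assms by (auto simp: local_zeros_def)

section \<open>Piecewise transformations\<close>

definition lit_expr :: "bool \<Rightarrow> 'a bexp \<Rightarrow> 'a bexp" where
  "lit_expr b l = (if b then l else Compl l)"

fun minterm_expr :: "bool list \<Rightarrow> 'a::boolean_algebra bexp list \<Rightarrow> 'a bexp" where
  "minterm_expr (b # bs) (l # ls) = Meet (lit_expr b l) (minterm_expr bs ls)"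
| "minterm_expr _ _ = Const top"

definition join_expr :: "'a::boolean_algebra bexp list \<Rightarrow> 'a bexp" where
  "join_expr es = foldr Join es (Const bot)"

definition leaves :: "'a list \<Rightarrow> nat \<Rightarrow> 'a bexp list" where
  "leaves ks n = map Const ks @ map Var [0..<n]"

lemma beval_minterm_expr: "beval (minterm_expr \<beta> ls) x = minterm \<beta> (map (\<lambda>l. beval l x) ls)"
  by (induction \<beta> ls rule: minterm_expr.induct) (auto simp: lit_expr_def lit_def)

lemma beval_join_expr: "beval (join_expr es) x = join_list (map (\<lambda>e. beval e x) es)"
  by (induction es) (auto simp: join_expr_def)

lemma beval_leaves: "length x = n \<Longrightarrow> map (\<lambda>l. beval l x) (leaves ks n) = ks @ x"
  by (auto simp: leaves_def comp_def intro: nth_equalityI)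

lemma bvars_minterm_expr: "\<forall>l\<in>set ls. bvars_below n l \<Longrightarrow> bvars_below n (minterm_expr \<beta> ls)"
  by (induction \<beta> ls rule: minterm_expr.induct) (auto simp: lit_expr_def)

lemma bvars_join_expr: "\<forall>e\<in>set es. bvars_below n e \<Longrightarrow> bvars_below n (join_expr es)"
  by (induction es) (auto simp: join_expr_def)

(* Given a family \<sigma> of maps of bit vectors indexed by atoms, piecewise_map ks n \<sigma>
   is the Boolean transformation which, on the piece of x over the atom \<tau> with sign
   vector \<alpha>, has the sign vector \<sigma> \<tau> \<alpha>. *)
definition piecewise_expr ::
  "'a::boolean_algebra list \<Rightarrow> nat \<Rightarrow> (bool list \<Rightarrow> bool list \<Rightarrow> bool list) \<Rightarrow> nat \<Rightarrow> 'a bexp" where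
  "piecewise_expr ks n \<sigma> i = join_expr (map (\<lambda>\<beta>. minterm_expr \<beta> (leaves ks n))
     (filter (\<lambda>\<beta>. \<sigma> (take (length ks) \<beta>) (drop (length ks) \<beta>) ! i)
        (List.n_lists (length ks + n) [True, False])))"

definition piecewise_map ::
  "'a::boolean_algebra list \<Rightarrow> nat \<Rightarrow> (bool list \<Rightarrow> bool list \<Rightarrow> bool list) \<Rightarrow> 'a list \<Rightarrow> 'a list" where
  "piecewise_map ks n \<sigma> x = map (\<lambda>i. beval (piecewise_expr ks n \<sigma> i) x) [0..<n]"

lemma length_piecewise_map [simp]: "length (piecewise_map ks n \<sigma> x) = n"
  by (simp add: piecewise_map_def)

lemma bvars_piecewise_expr: "bvars_below n (piecewise_expr ks n \<sigma> i)"
  unfolding piecewise_expr_def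
  by (intro bvars_join_expr) (auto simp: leaves_def intro!: bvars_minterm_expr)

lemma piecewise_map_bool_trans:
  "piecewise_map ks n \<sigma> ` W \<subseteq> W' \<Longrightarrow> bool_trans n n (piecewise_map ks n \<sigma>) W W'"
  unfolding bool_trans_def
  by (intro conjI exI[of _ "map (\<lambda>i x. beval (piecewise_expr ks n \<sigma> i) x) [0..<n]"])
    (auto simp: bool_fun_def piecewise_map_def intro: bvars_piecewise_expr)

lemma piecewise_map_on_piece:
  fixes d :: "'a::boolean_algebra"
  assumes "length \<tau> = length ks" "length \<alpha> = n" "length x = n"
    and "d \<le> minterm \<tau> ks" "d \<le> minterm \<alpha> x" "i < n"
  shows "inf (piecewise_map ks n \<sigma> x ! i) d = (if \<sigma> \<tau> \<alpha> ! i then d else bot)"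
proof -
  define L where "L = ks @ x"
  define P where "P = (\<lambda>\<beta>. \<sigma> (take (length ks) \<beta>) (drop (length ks) \<beta>) ! i)"
  define NL where "NL = List.n_lists (length ks + n) [True, False]"
  have d: "d \<le> minterm (\<tau> @ \<alpha>) L" and len: "length (\<tau> @ \<alpha>) = length L"
    using assms by (simp_all add: L_def minterm_append)
  have "inf (piecewise_map ks n \<sigma> x ! i) d = join_list (map (\<lambda>\<beta>. inf (minterm \<beta> L) d) (filter P NL))"
    using assms by (simp add: piecewise_map_def piecewise_expr_def beval_join_expr beval_minterm_expr
        beval_leaves join_list_inf comp_def L_def P_def NL_def)
  also have "\<dots> = join_list (map (\<lambda>\<beta>. if \<beta> = \<tau> @ \<alpha> then d else bot) (filter P NL))"
    using inf_minterm_below_minterm[OF d len] assms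
    by (intro arg_cong[where f = join_list] map_cong) (auto simp: NL_def in_n_lists_iff L_def)
  also have "\<dots> = (if P (\<tau> @ \<alpha>) then d else bot)"
    using assms by (subst join_list_two_valued) (auto simp: NL_def in_n_lists_iff)
  also have "P (\<tau> @ \<alpha>) = \<sigma> \<tau> \<alpha> ! i"
    using assms by (simp add: P_def)
  finally show ?thesis .
qed

lemma piecewise_map_below_minterm:
  fixes d :: "'a::boolean_algebra"
  assumes "length \<tau> = length ks" "length \<alpha> = n" "length x = n"
    and "d \<le> minterm \<tau> ks" "d \<le> minterm \<alpha> x" "length (\<sigma> \<tau> \<alpha>) = n"
  shows "d \<le> minterm (\<sigma> \<tau> \<alpha>) (piecewise_map ks n \<sigma> x)"
  using assms piecewise_map_on_piece[OF assms(1-5)] by (intro below_minterm_intro) auto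

section \<open>Patched points and inclusion of local zero sets\<close>

(* patch n c \<alpha> z is the point which below c has the bit pattern \<alpha> and agrees with z
   outside c; it transports local zeros back to genuine zeros. *)
definition patch :: "nat \<Rightarrow> 'a::boolean_algebra \<Rightarrow> bool list \<Rightarrow> 'a list \<Rightarrow> 'a list" where
  "patch n c \<alpha> z = map (\<lambda>i. sup (if \<alpha> ! i then c else bot) (inf (z ! i) (- c))) [0..<n]"

lemma length_patch [simp]: "length (patch n c \<alpha> z) = n"
  by (simp add: patch_def)

lemma patch_inside: "i < n \<Longrightarrow> inf (patch n c \<alpha> z ! i) c = (if \<alpha> ! i then c else bot)"
  by (simp add: patch_def inf_sup_distrib2 inf_assoc)

lemma patch_outside: "i < n \<Longrightarrow> inf (patch n c \<alpha> z ! i) (- c) = inf (z ! i) (- c)"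
  by (simp add: patch_def inf_sup_distrib2 inf_assoc)

lemma patch_below_minterm: "length \<alpha> = n \<Longrightarrow> c \<le> minterm \<alpha> (patch n c \<alpha> z)"
  by (rule below_minterm_intro) (auto simp: patch_inside)

lemma beval_patch:
  assumes "length \<tau> = length ks" "length \<alpha> = n" "length z = n"
    and "bvars_below n e" "set (consts_of e) \<subseteq> set ks"
  shows "beval e (patch n (minterm \<tau> ks) \<alpha> z)
    = sup (if eval_bits ks \<tau> \<alpha> e then minterm \<tau> ks else bot) (inf (beval e z) (- minterm \<tau> ks))"
proof -
  let ?c = "minterm \<tau> ks" and ?p = "patch n (minterm \<tau> ks) \<alpha> z"
  have "beval e ?p = sup (inf (beval e ?p) ?c) (inf (beval e ?p) (- ?c))"
    by (simp add: inf_sup_distrib1[symmetric])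
  moreover have "inf (beval e ?p) ?c = (if eval_bits ks \<tau> \<alpha> e then ?c else bot)"
    using assms by (intro beval_on_piece[where n = n]) (auto intro: patch_below_minterm)
  moreover have "inf (beval e ?p) (- ?c) = inf (beval e z) (- ?c)"
    using assms by (intro beval_relative[where n = n]) (auto simp: patch_outside)
  ultimately show ?thesis by simp
qed

lemma patch_in_zeros:
  assumes "length \<tau> = length ks" "\<alpha> \<in> local_zeros ks n \<tau> e" "z \<in> zeros n e"
    and "bvars_below n e" "set (consts_of e) \<subseteq> set ks"
  shows "patch n (minterm \<tau> ks) \<alpha> z \<in> zeros n e"
  using assms beval_patch[of \<tau> ks \<alpha> n z e] by (simp add: zeros_def local_zeros_def)

lemma local_zeros_mono:
  assumes "zeros n e1 \<noteq> {}" "zeros n e1 \<subseteq> zeros n e2"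
    and "length \<tau> = length ks" "minterm \<tau> ks \<noteq> bot"
    and "bvars_below n e1" "set (consts_of e1) \<subseteq> set ks"
    and "bvars_below n e2" "set (consts_of e2) \<subseteq> set ks"
  shows "local_zeros ks n \<tau> e1 \<subseteq> local_zeros ks n \<tau> e2"
proof
  fix \<alpha> assume \<alpha>: "\<alpha> \<in> local_zeros ks n \<tau> e1"
  obtain z where "z \<in> zeros n e1" using assms(1) by blast
  then have "patch n (minterm \<tau> ks) \<alpha> z \<in> zeros n e2"
    using patch_in_zeros[OF assms(3) \<alpha>] assms(2,5,6) by blast
  moreover have "minterm \<tau> ks \<le> minterm \<alpha> (patch n (minterm \<tau> ks) \<alpha> z)"
    using \<alpha> by (intro patch_below_minterm) (simp add: local_zeros_def)
  ultimately show "\<alpha> \<in> local_zeros ks n \<tau> e2"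
    using \<alpha> assms(3,4,7,8)
    by (intro piece_of_zero_is_local_zero[where x = "patch n (minterm \<tau> ks) \<alpha> z" and d = "minterm \<tau> ks"])
      (auto simp: local_zeros_def)
qed

lemma extend_bij_to_perm:
  assumes "finite W" "U \<subseteq> W" "V \<subseteq> W" "bij_betw f U V"
  shows "\<exists>s. bij_betw s W W \<and> (\<forall>a\<in>U. s a = f a)"
proof -
  have "card (W - U) = card (W - V)"
    using assms bij_betw_same_card[OF assms(4)] by (simp add: card_Diff_subset finite_subset)
  then obtain g where g: "bij_betw g (W - U) (W - V)"
    using assms(1) by (metis finite_Diff finite_same_card_bij)
  define s where "s = (\<lambda>x. if x \<in> U then f x else g x)"
  have "bij_betw s U V"
    using assms(4) by (rule bij_betw_cong[THEN iffD1, rotated]) (simp add: s_def)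
  moreover have "bij_betw s (W - U) (W - V)"
    using g by (rule bij_betw_cong[THEN iffD1, rotated]) (simp add: s_def)
  ultimately have "bij_betw s (U \<union> (W - U)) (V \<union> (W - V))"
    by (rule bij_betw_combine) auto
  moreover have "U \<union> (W - U) = W" "V \<union> (W - V) = W"
    using assms by auto
  ultimately show ?thesis by (auto simp: s_def)
qed

section \<open>Extension over each atom, and gluing\<close>

lemma eq_by_local_pieces:
  fixes a b :: "'a::boolean_algebra"
  assumes x: "x \<in> zeros n e" and e: "bvars_below n e" "set (consts_of e) \<subseteq> set ks"
    and local_eq: "\<And>\<tau> \<alpha> d. length \<tau> = length ks \<Longrightarrow> minterm \<tau> ks \<noteq> bot \<Longrightarrow>
         \<alpha> \<in> local_zeros ks n \<tau> e \<Longrightarrow> d \<le> minterm \<tau> ks \<Longrightarrow> d \<le> minterm \<alpha> x \<Longrightarrow> inf a d = inf b d"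
  shows "a = b"
proof (rule eq_by_minterms[where L = "ks @ x"])
  fix \<beta> :: "bool list"
  assume len: "length \<beta> = length (ks @ x)" and nz: "minterm \<beta> (ks @ x) \<noteq> bot"
  define \<tau> where "\<tau> = take (length ks) \<beta>"
  define \<alpha> where "\<alpha> = drop (length ks) \<beta>"
  have lens: "length \<tau> = length ks" "length \<alpha> = n"
    using len x by (auto simp: \<tau>_def \<alpha>_def zeros_def)
  have piece: "minterm \<beta> (ks @ x) = inf (minterm \<tau> ks) (minterm \<alpha> x)"
    using minterm_append[OF lens(1), of \<alpha> x] by (simp add: \<tau>_def \<alpha>_def)
  have "minterm \<tau> ks \<noteq> bot"
    using nz piece by auto
  moreover have "\<alpha> \<in> local_zeros ks n \<tau> e"
    using nz piece lens x e
    by (intro piece_of_zero_is_local_zero[where d = "minterm \<beta> (ks @ x)" and x = x]) auto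
  ultimately show "inf a (minterm \<beta> (ks @ x)) = inf b (minterm \<beta> (ks @ x))"
    using local_eq[OF lens(1)] piece by simp
qed

locale extension_setting =
  fixes n :: nat and eU eV eW :: "'a::boolean_algebra bexp" and fes :: "'a bexp list"
    and F :: "'a list \<Rightarrow> 'a list"
  assumes bvars: "bvars_below n eU" "bvars_below n eV" "bvars_below n eW"
      "\<forall>f\<in>set fes. bvars_below n f"
    and length_fes: "length fes = n"
    and F_expr: "\<forall>x\<in>zeros n eU. F x = map (\<lambda>f. beval f x) fes"
    and domains_sub: "zeros n eU \<union> zeros n eV \<subseteq> zeros n eW"
    and F_bij: "bij_betw F (zeros n eU) (zeros n eV)"
    and U_nonempty: "zeros n eU \<noteq> {}"
begin

abbreviation "U \<equiv> zeros n eU"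
abbreviation "V \<equiv> zeros n eV"
abbreviation "W \<equiv> zeros n eW"

(* All constants involved; their atoms are the minterms minterm \<tau> ks. *)
definition ks :: "'a list" where
  "ks = consts_of eU @ consts_of eV @ consts_of eW @ concat (map consts_of fes)"

lemma consts_in_ks:
  "set (consts_of eU) \<subseteq> set ks" "set (consts_of eV) \<subseteq> set ks" "set (consts_of eW) \<subseteq> set ks"
  "\<forall>f\<in>set fes. set (consts_of f) \<subseteq> set ks"
  by (auto simp: ks_def)

definition "U_at \<tau> = local_zeros ks n \<tau> eU"
definition "V_at \<tau> = local_zeros ks n \<tau> eV"
definition "W_at \<tau> = local_zeros ks n \<tau> eW"
definition "F_at \<tau> \<alpha> = map (\<lambda>f. eval_bits ks \<tau> \<alpha> f) fes"

lemma W_at_length: "\<alpha> \<in> W_at \<tau> \<Longrightarrow> length \<alpha> = n"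
  by (simp add: W_at_def local_zeros_def)

lemma V_nonempty: "V \<noteq> {}"
  using U_nonempty F_bij by (auto simp: bij_betw_def)

lemma U_at_sub_W_at: "length \<tau> = length ks \<Longrightarrow> minterm \<tau> ks \<noteq> bot \<Longrightarrow> U_at \<tau> \<subseteq> W_at \<tau>"
  unfolding U_at_def W_at_def
  using U_nonempty domains_sub bvars consts_in_ks by (intro local_zeros_mono) auto

lemma V_at_sub_W_at: "length \<tau> = length ks \<Longrightarrow> minterm \<tau> ks \<noteq> bot \<Longrightarrow> V_at \<tau> \<subseteq> W_at \<tau>"
  unfolding V_at_def W_at_def
  using V_nonempty domains_sub bvars consts_in_ks by (intro local_zeros_mono) auto

lemma patch_in_U: "length \<tau> = length ks \<Longrightarrow> \<alpha> \<in> U_at \<tau> \<Longrightarrow> z \<in> U \<Longrightarrow> patch n (minterm \<tau> ks) \<alpha> z \<in> U"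
  unfolding U_at_def using bvars consts_in_ks by (intro patch_in_zeros) auto

lemma patch_in_V: "length \<tau> = length ks \<Longrightarrow> \<beta> \<in> V_at \<tau> \<Longrightarrow> z \<in> V \<Longrightarrow> patch n (minterm \<tau> ks) \<beta> z \<in> V"
  unfolding V_at_def using bvars consts_in_ks by (intro patch_in_zeros) auto

lemma F_patch:
  assumes "length \<tau> = length ks" "\<alpha> \<in> U_at \<tau>" "z \<in> U"
  shows "F (patch n (minterm \<tau> ks) \<alpha> z) = map (\<lambda>f. sup (if eval_bits ks \<tau> \<alpha> f then minterm \<tau> ks else bot)
           (inf (beval f z) (- minterm \<tau> ks))) fes"
  using F_expr patch_in_U[OF assms] assms bvars consts_in_ks beval_patch[of \<tau> ks \<alpha> n z]
  by (simp add: U_at_def local_zeros_def zeros_def)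

(* Over a nonzero atom, F_at maps U_at into V_at, injectively and onto: points of
   U and V are patched to realise given sign vectors, and F is a bijection. *)
lemma F_at_into:
  assumes \<tau>: "length \<tau> = length ks" "minterm \<tau> ks \<noteq> bot" and \<alpha>: "\<alpha> \<in> U_at \<tau>"
  shows "F_at \<tau> \<alpha> \<in> V_at \<tau>"
proof -
  let ?c = "minterm \<tau> ks"
  obtain z where z: "z \<in> U" using U_nonempty by blast
  let ?p = "patch n ?c \<alpha> z"
  have FV: "F ?p \<in> V"
    using patch_in_U[OF \<tau>(1) \<alpha> z] F_bij by (auto simp: bij_betw_def)
  have "?c \<le> minterm (F_at \<tau> \<alpha>) (F ?p)"
  proof (rule below_minterm_intro)
    show "length (F_at \<tau> \<alpha>) = length (F ?p)"
      using FV by (simp add: zeros_def F_at_def length_fes)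
    fix j assume "j < length (F ?p)"
    then show "inf (F ?p ! j) ?c = (if F_at \<tau> \<alpha> ! j then ?c else bot)"
      using F_patch[OF \<tau>(1) \<alpha> z] length_fes
      by (simp add: F_at_def inf_sup_distrib2 inf_assoc)
  qed
  then show ?thesis
    using FV \<tau> bvars consts_in_ks unfolding V_at_def
    by (intro piece_of_zero_is_local_zero[where d = ?c and x = "F ?p"]) (auto simp: F_at_def length_fes)
qed

lemma F_at_inj:
  assumes \<tau>: "length \<tau> = length ks" "minterm \<tau> ks \<noteq> bot"
  shows "inj_on (F_at \<tau>) (U_at \<tau>)"
proof
  let ?c = "minterm \<tau> ks"
  obtain z where z: "z \<in> U" using U_nonempty by blast
  fix \<alpha> \<alpha>' assume \<alpha>: "\<alpha> \<in> U_at \<tau>" "\<alpha>' \<in> U_at \<tau>" and eq: "F_at \<tau> \<alpha> = F_at \<tau> \<alpha>'"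
  have "F (patch n ?c \<alpha> z) = F (patch n ?c \<alpha>' z)"
    using eq F_patch[OF \<tau>(1) \<alpha>(1) z] F_patch[OF \<tau>(1) \<alpha>(2) z] by (simp add: F_at_def map_eq_conv)
  then have same_patch: "patch n ?c \<alpha> z = patch n ?c \<alpha>' z"
    using F_bij patch_in_U[OF \<tau>(1) _ z] \<alpha> by (auto simp: bij_betw_def inj_on_def)
  show "\<alpha> = \<alpha>'"
  proof (rule nth_equalityI)
    show "length \<alpha> = length \<alpha>'" using \<alpha> by (simp add: U_at_def local_zeros_def)
    fix i assume "i < length \<alpha>"
    then have i: "i < n" using \<alpha> by (simp add: U_at_def local_zeros_def)
    have "(if \<alpha> ! i then ?c else bot) = (if \<alpha>' ! i then ?c else bot)"
      using patch_inside[OF i, of ?c \<alpha> z] patch_inside[OF i, of ?c \<alpha>' z] same_patch by simp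
    then show "\<alpha> ! i = \<alpha>' ! i" using \<tau>(2) by (auto split: if_splits)
  qed
qed

lemma F_at_onto:
  assumes \<tau>: "length \<tau> = length ks" "minterm \<tau> ks \<noteq> bot" and \<beta>: "\<beta> \<in> V_at \<tau>"
  shows "\<beta> \<in> F_at \<tau> ` U_at \<tau>"
proof -
  let ?c = "minterm \<tau> ks"
  obtain z where "z \<in> V" using V_nonempty by blast
  then obtain x where x: "x \<in> U" "F x = patch n ?c \<beta> z"
    using patch_in_V[OF \<tau>(1) \<beta>] F_bij by (force simp: bij_betw_def)
  have lx: "length x = n" using x by (simp add: zeros_def)
  obtain \<alpha> where \<alpha>: "length \<alpha> = length x" "inf ?c (minterm \<alpha> x) \<noteq> bot"
    using nonzero_meets_minterm[OF \<tau>(2)] by blast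
  define d where "d = inf ?c (minterm \<alpha> x)"
  have d: "d \<le> ?c" "d \<le> minterm \<alpha> x" "d \<noteq> bot" using \<alpha> by (auto simp: d_def)
  have \<alpha>U: "\<alpha> \<in> U_at \<tau>"
    unfolding U_at_def using d x \<alpha> lx \<tau> bvars consts_in_ks
    by (intro piece_of_zero_is_local_zero[where d = d and x = x]) auto
  have "F_at \<tau> \<alpha> = \<beta>"
  proof (rule nth_equalityI)
    show "length (F_at \<tau> \<alpha>) = length \<beta>"
      using \<beta> by (simp add: F_at_def length_fes V_at_def local_zeros_def)
    fix j assume "j < length (F_at \<tau> \<alpha>)"
    then have j: "j < n" by (simp add: F_at_def length_fes)
    have "inf (F x ! j) d = (if eval_bits ks \<tau> \<alpha> (fes ! j) then d else bot)"
      using F_expr x(1) j length_fes d \<alpha> lx \<tau> bvars consts_in_ks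
      by (simp add: beval_on_piece[where n = n])
    moreover have "d \<le> minterm \<beta> (F x)"
      using d(1) patch_below_minterm[of \<beta> n ?c z] \<beta> x(2) by (simp add: V_at_def local_zeros_def)
    then have "inf (F x ! j) d = (if \<beta> ! j then d else bot)"
      using below_minterm_nth[of d \<beta> "F x" j] \<beta> x(2) j by (simp add: V_at_def local_zeros_def)
    ultimately show "F_at \<tau> \<alpha> ! j = \<beta> ! j"
      using d(3) j length_fes by (auto simp: F_at_def split: if_splits)
  qed
  then show ?thesis using \<alpha>U by blast
qed

lemma F_at_bij: "length \<tau> = length ks \<Longrightarrow> minterm \<tau> ks \<noteq> bot \<Longrightarrow> bij_betw (F_at \<tau>) (U_at \<tau>) (V_at \<tau>)"
  unfolding bij_betw_def using F_at_inj F_at_into F_at_onto by blast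

lemma piecewise_map_into_W:
  assumes \<sigma>: "\<And>\<tau> \<alpha>. length \<tau> = length ks \<Longrightarrow> minterm \<tau> ks \<noteq> bot \<Longrightarrow> \<alpha> \<in> W_at \<tau> \<Longrightarrow> \<sigma> \<tau> \<alpha> \<in> W_at \<tau>"
    and x: "x \<in> W"
  shows "piecewise_map ks n \<sigma> x \<in> W"
proof -
  have lx: "length x = n" using x by (simp add: zeros_def)
  have "beval eW (piecewise_map ks n \<sigma> x) = bot"
  proof (rule eq_by_local_pieces[OF x bvars(3) consts_in_ks(3)])
    fix \<tau> \<alpha> and d :: 'a
    assume \<tau>: "length \<tau> = length ks" "minterm \<tau> ks \<noteq> bot" and \<alpha>: "\<alpha> \<in> local_zeros ks n \<tau> eW"
      and d: "d \<le> minterm \<tau> ks" "d \<le> minterm \<alpha> x"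
    have \<sigma>\<alpha>: "\<sigma> \<tau> \<alpha> \<in> W_at \<tau>" using \<sigma>[OF \<tau>] \<alpha> by (simp add: W_at_def)
    then have "d \<le> minterm (\<sigma> \<tau> \<alpha>) (piecewise_map ks n \<sigma> x)"
      using \<tau>(1) \<alpha> lx d by (intro piecewise_map_below_minterm) (auto simp: W_at_length local_zeros_def)
    then show "inf (beval eW (piecewise_map ks n \<sigma> x)) d = inf bot d"
      using \<sigma>\<alpha> \<tau>(1) d(1) bvars(3) consts_in_ks(3) unfolding W_at_def
      by (simp add: local_zero_vanishes_on_piece)
  qed
  then show ?thesis by (simp add: zeros_def)
qed

lemma piecewise_map_inverse:
  assumes inv: "\<And>\<tau> \<alpha>. length \<tau> = length ks \<Longrightarrow> minterm \<tau> ks \<noteq> bot \<Longrightarrow> \<alpha> \<in> W_at \<tau> \<Longrightarrow>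
      \<sigma> \<tau> \<alpha> \<in> W_at \<tau> \<and> \<rho> \<tau> (\<sigma> \<tau> \<alpha>) = \<alpha>"
    and x: "x \<in> W"
  shows "piecewise_map ks n \<rho> (piecewise_map ks n \<sigma> x) = x"
proof (rule nth_equalityI)
  have lx: "length x = n" using x by (simp add: zeros_def)
  then show "length (piecewise_map ks n \<rho> (piecewise_map ks n \<sigma> x)) = length x" by simp
  fix i assume "i < length (piecewise_map ks n \<rho> (piecewise_map ks n \<sigma> x))"
  then have i: "i < n" by simp
  show "piecewise_map ks n \<rho> (piecewise_map ks n \<sigma> x) ! i = x ! i"
  proof (rule eq_by_local_pieces[OF x bvars(3) consts_in_ks(3)])
    fix \<tau> \<alpha> and d :: 'a
    assume \<tau>: "length \<tau> = length ks" "minterm \<tau> ks \<noteq> bot" and \<alpha>: "\<alpha> \<in> local_zeros ks n \<tau> eW"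
      and d: "d \<le> minterm \<tau> ks" "d \<le> minterm \<alpha> x"
    have \<sigma>\<alpha>: "\<sigma> \<tau> \<alpha> \<in> W_at \<tau>" and returns: "\<rho> \<tau> (\<sigma> \<tau> \<alpha>) = \<alpha>"
      using inv[OF \<tau>] \<alpha> by (auto simp: W_at_def)
    have l\<alpha>: "length \<alpha> = n" using \<alpha> by (simp add: local_zeros_def)
    have "d \<le> minterm (\<sigma> \<tau> \<alpha>) (piecewise_map ks n \<sigma> x)"
      using \<tau>(1) l\<alpha> lx d \<sigma>\<alpha> by (intro piecewise_map_below_minterm) (auto simp: W_at_length)
    then have "inf (piecewise_map ks n \<rho> (piecewise_map ks n \<sigma> x) ! i) d = (if \<alpha> ! i then d else bot)"
      using piecewise_map_on_piece[of \<tau> ks "\<sigma> \<tau> \<alpha>" n _ d i \<rho>] \<tau>(1) \<sigma>\<alpha> d(1) i returns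
      by (simp add: W_at_length)
    also have "\<dots> = inf (x ! i) d"
      using below_minterm_nth[OF d(2)] l\<alpha> lx i by simp
    finally show "inf (piecewise_map ks n \<rho> (piecewise_map ks n \<sigma> x) ! i) d = inf (x ! i) d" .
  qed
qed

lemma piecewise_map_extends_F:
  assumes agree: "\<And>\<tau> \<alpha>. length \<tau> = length ks \<Longrightarrow> minterm \<tau> ks \<noteq> bot \<Longrightarrow> \<alpha> \<in> U_at \<tau> \<Longrightarrow>
      \<sigma> \<tau> \<alpha> = F_at \<tau> \<alpha>"
    and x: "x \<in> U"
  shows "piecewise_map ks n \<sigma> x = F x"
proof (rule nth_equalityI)
  have lx: "length x = n" using x by (simp add: zeros_def)
  then show "length (piecewise_map ks n \<sigma> x) = length (F x)"
    using x F_expr length_fes by simp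
  fix i assume "i < length (piecewise_map ks n \<sigma> x)"
  then have i: "i < n" by simp
  have Fx: "F x ! i = beval (fes ! i) x" and fi: "fes ! i \<in> set fes"
    using F_expr x i length_fes by auto
  show "piecewise_map ks n \<sigma> x ! i = F x ! i"
    unfolding Fx
  proof (rule eq_by_local_pieces[OF x bvars(1) consts_in_ks(1)])
    fix \<tau> \<alpha> and d :: 'a
    assume \<tau>: "length \<tau> = length ks" "minterm \<tau> ks \<noteq> bot" and \<alpha>: "\<alpha> \<in> local_zeros ks n \<tau> eU"
      and d: "d \<le> minterm \<tau> ks" "d \<le> minterm \<alpha> x"
    have l\<alpha>: "length \<alpha> = n" using \<alpha> by (simp add: local_zeros_def)
    have "inf (piecewise_map ks n \<sigma> x ! i) d = (if \<sigma> \<tau> \<alpha> ! i then d else bot)"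
      using piecewise_map_on_piece[OF \<tau>(1) l\<alpha> lx d i] .
    also have "\<dots> = (if eval_bits ks \<tau> \<alpha> (fes ! i) then d else bot)"
      using agree[OF \<tau>] \<alpha> i length_fes by (simp add: U_at_def F_at_def)
    also have "\<dots> = inf (beval (fes ! i) x) d"
      using beval_on_piece[OF \<tau>(1) l\<alpha> lx d] fi bvars(4) consts_in_ks(4) by simp
    finally show "inf (piecewise_map ks n \<sigma> x ! i) d = inf (beval (fes ! i) x) d" .
  qed
qed

(* The theorem in the setting of expressions: extend each F_at to a permutation of
   the finite set W_at and glue these permutations and their inverses. *)
theorem extension_exists: "\<exists>F'. bool_iso n n F' W W \<and> (\<forall>x\<in>U. F' x = F x)"
proof -
  let ?atom = "\<lambda>\<tau>. length \<tau> = length ks \<and> minterm \<tau> ks \<noteq> bot"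
  have "\<exists>s. ?atom \<tau> \<longrightarrow> bij_betw s (W_at \<tau>) (W_at \<tau>) \<and> (\<forall>\<alpha>\<in>U_at \<tau>. s \<alpha> = F_at \<tau> \<alpha>)" for \<tau>
  proof (cases "?atom \<tau>")
    case True
    have "finite (W_at \<tau>)"
      by (rule finite_subset[of _ "set (List.n_lists n [True, False])"])
        (auto simp: W_at_length in_n_lists_iff)
    with True show ?thesis
      using extend_bij_to_perm[OF _ U_at_sub_W_at V_at_sub_W_at F_at_bij] by simp
  qed blast
  then obtain \<sigma> where \<sigma>: "\<forall>\<tau>. ?atom \<tau> \<longrightarrow> bij_betw (\<sigma> \<tau>) (W_at \<tau>) (W_at \<tau>)
      \<and> (\<forall>\<alpha>\<in>U_at \<tau>. \<sigma> \<tau> \<alpha> = F_at \<tau> \<alpha>)"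
    using choice[of "\<lambda>\<tau> s. ?atom \<tau> \<longrightarrow> bij_betw s (W_at \<tau>) (W_at \<tau>) \<and> (\<forall>\<alpha>\<in>U_at \<tau>. s \<alpha> = F_at \<tau> \<alpha>)"]
    by blast
  define \<rho> where "\<rho> \<tau> = inv_into (W_at \<tau>) (\<sigma> \<tau>)" for \<tau>
  have \<sigma>\<rho>: "\<sigma> \<tau> \<alpha> \<in> W_at \<tau> \<and> \<rho> \<tau> (\<sigma> \<tau> \<alpha>) = \<alpha>" and \<rho>\<sigma>: "\<rho> \<tau> \<alpha> \<in> W_at \<tau> \<and> \<sigma> \<tau> (\<rho> \<tau> \<alpha>) = \<alpha>"
    if "length \<tau> = length ks" "minterm \<tau> ks \<noteq> bot" "\<alpha> \<in> W_at \<tau>" for \<tau> \<alpha>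
    using \<sigma> that by (auto simp: \<rho>_def bij_betw_def inv_into_into f_inv_into_f)
  let ?F' = "piecewise_map ks n \<sigma>" and ?G = "piecewise_map ks n \<rho>"
  have into: "?F' ` W \<subseteq> W" "?G ` W \<subseteq> W"
    using piecewise_map_into_W[of \<sigma>, OF conjunct1[OF \<sigma>\<rho>]]
      piecewise_map_into_W[of \<rho>, OF conjunct1[OF \<rho>\<sigma>]] by blast+
  have "bij_betw ?F' W W"
  proof (rule bij_betw_byWitness[where f' = ?G])
    show "\<forall>x\<in>W. ?G (?F' x) = x" using piecewise_map_inverse[of \<sigma> \<rho>, OF \<sigma>\<rho>] by blast
    show "\<forall>x\<in>W. ?F' (?G x) = x" using piecewise_map_inverse[of \<rho> \<sigma>, OF \<rho>\<sigma>] by blast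
  qed (use into in auto)
  moreover have "\<forall>x\<in>U. ?F' x = F x"
    using piecewise_map_extends_F[of \<sigma>] \<sigma> by blast
  ultimately show ?thesis
    using piecewise_map_bool_trans[OF into(1)] by (auto simp: bool_iso_def)
qed
end

lemma bool_domain_zeros:
  assumes "bool_domain n (U :: 'a::boolean_algebra list set)"
  obtains e where "bvars_below n e" "U = zeros n e"
proof -
  obtain f where f: "bool_fun n f" "U = {x \<in> bool_points n. f x = bot}"
    using assms by (auto simp: bool_domain_def)
  then obtain e where e: "bvars_below n e" "\<forall>x\<in>bool_points n. f x = beval e x"
    by (auto simp: bool_fun_def)
  have "U = zeros n e"
    using f(2) e(2) by (auto simp: zeros_def bool_points_def)
  with e(1) show ?thesis by (rule that)
qed

lemma bool_trans_exprs:
  assumes "bool_trans n m F U V" and "\<forall>x\<in>U. length x = n"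
  obtains fes where "length fes = m" "\<forall>f\<in>set fes. bvars_below n f"
    "\<forall>x\<in>U. F x = map (\<lambda>f. beval f x) fes"
proof -
  obtain Fs where Fs: "length Fs = m" "\<forall>g\<in>set Fs. bool_fun n g" "\<forall>x\<in>U. F x = map (\<lambda>g. g x) Fs"
    using assms(1) by (auto simp: bool_trans_def)
  have "\<forall>g\<in>set Fs. \<exists>e. bvars_below n e \<and> (\<forall>x\<in>bool_points n. g x = beval e x)"
    using Fs(2) by (auto simp: bool_fun_def)
  from bchoice[OF this] obtain ex where ex: "\<forall>g\<in>set Fs. bvars_below n (ex g) \<and> (\<forall>x\<in>bool_points n. g x = beval (ex g) x)"
    by blast
  show ?thesis
  proof (rule that[of "map ex Fs"])
    show "\<forall>x\<in>U. F x = map (\<lambda>f. beval f x) (map ex Fs)"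
      using Fs(3) ex assms(2) by (auto simp: bool_points_def)
  qed (use Fs(1) ex in auto)
qed

(* The identity is a Boolean isomorphism; it handles the case of empty U. *)
lemma identity_bool_iso:
  assumes "\<forall>x\<in>W. length x = n"
  shows "bool_iso n n id (W :: 'a::boolean_algebra list set) W"
  unfolding bool_iso_def bool_trans_def
proof (intro conjI exI[of _ "map (\<lambda>i x. x ! i) [0..<n]"])
  show "\<forall>g\<in>set (map (\<lambda>i x. x ! i) [0..<n]). bool_fun n g"
    by (auto simp: bool_fun_def intro!: exI[of _ "Var i" for i])
  show "\<forall>x\<in>W. id x = map (\<lambda>g. g x) (map (\<lambda>i x. x ! i) [0..<n])"
    using assms by (auto simp: comp_def intro: nth_equalityI)
qed auto

theorem theorem1:
  fixes U V W :: "'a::boolean_algebra list set" and n :: nat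
    and F :: "'a list \<Rightarrow> 'a list"
  assumes "bool_domain n U" and "bool_domain n V" and "bool_domain n W"
    and "U \<union> V \<subseteq> W"
    and "bool_iso n n F U V"
  shows "\<exists>F'. bool_iso n n F' W W \<and> (\<forall>x\<in>U. F' x = F x)"
proof -
  obtain eU where eU: "bvars_below n eU" "U = zeros n eU" by (rule bool_domain_zeros[OF assms(1)])
  obtain eV where eV: "bvars_below n eV" "V = zeros n eV" by (rule bool_domain_zeros[OF assms(2)])
  obtain eW where eW: "bvars_below n eW" "W = zeros n eW" by (rule bool_domain_zeros[OF assms(3)])
  obtain fes where fes: "length fes = n" "\<forall>f\<in>set fes. bvars_below n f"
    "\<forall>x\<in>U. F x = map (\<lambda>f. beval f x) fes"
    using assms(5) by (rule bool_trans_exprs[OF bool_iso_def[THEN iffD1, THEN conjunct1]])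
      (simp add: eU(2) zeros_def)
  show ?thesis
  proof (cases "U = {}")
    case True
    then show ?thesis using identity_bool_iso[of W n] by (auto simp: eW(2) zeros_def)
  next
    case False
    have "extension_setting n eU eV eW fes F"
      using eU(1) eV(1) eW(1) fes False assms(4,5)
      unfolding extension_setting_def bool_iso_def eU(2) eV(2) eW(2) by blast
    from extension_setting.extension_exists[OF this] show ?thesis
      by (simp add: eU(2) eW(2))
  qed
qed
end
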